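(* Let $R$ be a ring and $n\in\{0,1,2,\dots\}\cup\{\infty\}$. Let $f:X^\bullet\to Y^\bullet$ be an $n$-quasi-isomorphism where $X^\bullet$ and $Y^\bullet$ are bounded above complexes of $n$-projective left $R$-modules. Then $f$ is a homotopy equivalence.
   Context: $R$ is an associative ring with identity; modules are left $R$-modules; $\infty+1=\infty$. For a positive integer $k$, $\mathcal{P}^{<k}$ is the class of modules $M$ admitting an exact sequence $0\to P_j\to\cdots\to P_0\to M\to 0$ with $j\le k-1$ and every $P_i$ finitely generated projective; $\mathcal{P}^{<\infty}$ is the class of modules admitting such a sequence for some finite $j$. A short exact sequence is $n$-exact if it stays exact under $\mathrm{Hom}_R(M,-)$ for all $M\in\mathcal{P}^{<n+1}$; a module $P$ is $n$-projective if $\mathrm{Hom}_R(P,-)$ preserves exactness of every $n$-exact sequence. A complex $Z^\bullet$ is $n$-exact if $\mathrm{Hom}_R(P,Z^\bullet)$ is exact for every $P\in\mathcal{P}^{<n+1}$; a cochain map is an $n$-quasi-isomorphism if its mapping cone is $n$-exact. *)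

theory Defs
  imports "HOL-Algebra.Module" "HOL-Library.Extended_Nat"
begin

definition lmodule :: "'r ring \<Rightarrow> ('r, 'a) module \<Rightarrow> bool" where
  "lmodule R M \<longleftrightarrow> ring R \<and> abelian_group M \<and> module_axioms R M"

definition lhom :: "'r ring \<Rightarrow> ('r, 'a) module \<Rightarrow> ('r, 'b) module \<Rightarrow> ('a \<Rightarrow> 'b) \<Rightarrow> bool" where
  "lhom R M N f \<longleftrightarrow> f \<in> carrier M \<rightarrow> carrier N
     \<and> (\<forall>x\<in>carrier M. \<forall>y\<in>carrier M. f (x \<oplus>\<^bsub>M\<^esub> y) = f x \<oplus>\<^bsub>N\<^esub> f y)
     \<and> (\<forall>r\<in>carrier R. \<forall>x\<in>carrier M. f (r \<odot>\<^bsub>M\<^esub> x) = r \<odot>\<^bsub>N\<^esub> f x)"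

definition short_exact :: "'r ring \<Rightarrow> ('r, 'a) module \<Rightarrow> ('r, 'b) module \<Rightarrow> ('r, 'c) module
    \<Rightarrow> ('a \<Rightarrow> 'b) \<Rightarrow> ('b \<Rightarrow> 'c) \<Rightarrow> bool" where
  "short_exact R A B C \<alpha> \<beta> \<longleftrightarrow> lmodule R A \<and> lmodule R B \<and> lmodule R C
     \<and> lhom R A B \<alpha> \<and> lhom R B C \<beta> \<and> inj_on \<alpha> (carrier A)
     \<and> \<beta> ` carrier B = carrier C
     \<and> {b \<in> carrier B. \<beta> b = \<zero>\<^bsub>C\<^esub>} = \<alpha> ` carrier A"

text \<open>Exactness of 0 -> Hom(M,A) -> Hom(M,B) -> Hom(M,C) -> 0 (homomorphisms compared on the carrier).\<close>

definition hom_exact :: "'r ring \<Rightarrow> ('r, 'm) module \<Rightarrow> ('r, 'a) module \<Rightarrow> ('r, 'b) module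
    \<Rightarrow> ('r, 'c) module \<Rightarrow> ('a \<Rightarrow> 'b) \<Rightarrow> ('b \<Rightarrow> 'c) \<Rightarrow> bool" where
  "hom_exact R M A B C \<alpha> \<beta> \<longleftrightarrow>
     (\<forall>g. lhom R M A g \<and> (\<forall>x\<in>carrier M. \<alpha> (g x) = \<zero>\<^bsub>B\<^esub>)
          \<longrightarrow> (\<forall>x\<in>carrier M. g x = \<zero>\<^bsub>A\<^esub>))
   \<and> (\<forall>h. lhom R M A h \<longrightarrow> (\<forall>x\<in>carrier M. \<beta> (\<alpha> (h x)) = \<zero>\<^bsub>C\<^esub>))
   \<and> (\<forall>g. lhom R M B g \<and> (\<forall>x\<in>carrier M. \<beta> (g x) = \<zero>\<^bsub>C\<^esub>)
          \<longrightarrow> (\<exists>h. lhom R M A h \<and> (\<forall>x\<in>carrier M. \<alpha> (h x) = g x)))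
   \<and> (\<forall>g. lhom R M C g \<longrightarrow> (\<exists>h. lhom R M B h \<and> (\<forall>x\<in>carrier M. \<beta> (h x) = g x)))"

definition lincomb :: "('r, 'a) module \<Rightarrow> 'r list \<Rightarrow> 'a list \<Rightarrow> 'a" where
  "lincomb M rs xs = foldr (\<lambda>(r, x) acc. r \<odot>\<^bsub>M\<^esub> x \<oplus>\<^bsub>M\<^esub> acc) (zip rs xs) \<zero>\<^bsub>M\<^esub>"

definition fin_gen :: "'r ring \<Rightarrow> ('r, 'a) module \<Rightarrow> bool" where
  "fin_gen R M \<longleftrightarrow> lmodule R M \<and> (\<exists>xs. set xs \<subseteq> carrier M \<and>
     (\<forall>m\<in>carrier M. \<exists>rs. set rs \<subseteq> carrier R \<and> length rs = length xs \<and> m = lincomb M rs xs))"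

text \<open>Projectivity: lifting property along all surjective homomorphisms between modules
  whose carriers live in the same type as P.\<close>

definition projective_mod :: "'r ring \<Rightarrow> ('r, 'p) module \<Rightarrow> bool" where
  "projective_mod R P \<longleftrightarrow> lmodule R P \<and>
     (\<forall>(A :: ('r, 'p) module) (B :: ('r, 'p) module) g h.
        lmodule R A \<and> lmodule R B \<and> lhom R A B g \<and> g ` carrier A = carrier B \<and> lhom R P B h
        \<longrightarrow> (\<exists>l. lhom R P A l \<and> (\<forall>x\<in>carrier P. g (l x) = h x)))"

text \<open>Fixed carrier type for the test modules (finitely presented modules R^k/K and
  finitely generated projectives all have an isomorphic copy on this type).\<close>

type_synonym 'r tmod = "(nat \<Rightarrow> 'r) set"

text \<open>The class P^{<k} (k a positive integer or infinity): M admits an exact sequence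
  0 -> P_j -> ... -> P_0 -> M -> 0 with j < k (i.e. j <= k-1) and all P_i finitely
  generated projective; P_i is the zero module for i > j.\<close>

definition fp_class :: "'r ring \<Rightarrow> enat \<Rightarrow> ('r, 'm) module \<Rightarrow> bool" where
  "fp_class R k M \<longleftrightarrow> lmodule R M \<and>
     (\<exists>(j :: nat) (P :: nat \<Rightarrow> ('r, 'r tmod) module) dd eps.
        enat j < k
      \<and> (\<forall>i. fin_gen R (P i) \<and> projective_mod R (P i))
      \<and> (\<forall>i>j. carrier (P i) = {\<zero>\<^bsub>P i\<^esub>})
      \<and> (\<forall>i. lhom R (P (Suc i)) (P i) (dd i))
      \<and> lhom R (P 0) M eps
      \<and> eps ` carrier (P 0) = carrier M
      \<and> {x \<in> carrier (P 0). eps x = \<zero>\<^bsub>M\<^esub>} = dd 0 ` carrier (P 1)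
      \<and> (\<forall>i. {x \<in> carrier (P (Suc i)). dd i x = \<zero>\<^bsub>P i\<^esub>} = dd (Suc i) ` carrier (P (Suc (Suc i)))))"

text \<open>n-exact short exact sequences (n in N or infinity; note \<infinity> + 1 = \<infinity> in enat).\<close>

definition n_exact_seq :: "'r ring \<Rightarrow> enat \<Rightarrow> ('r, 'a) module \<Rightarrow> ('r, 'b) module
    \<Rightarrow> ('r, 'c) module \<Rightarrow> ('a \<Rightarrow> 'b) \<Rightarrow> ('b \<Rightarrow> 'c) \<Rightarrow> bool" where
  "n_exact_seq R n A B C \<alpha> \<beta> \<longleftrightarrow> short_exact R A B C \<alpha> \<beta> \<and>
     (\<forall>M :: ('r, 'r tmod) module. fp_class R (n + 1) M \<longrightarrow> hom_exact R M A B C \<alpha> \<beta>)"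

text \<open>n-projective modules; the n-exact sequences tested have carriers in the type 'u.\<close>

definition n_projective :: "'r ring \<Rightarrow> enat \<Rightarrow> 'u itself \<Rightarrow> ('r, 'p) module \<Rightarrow> bool" where
  "n_projective R n U P \<longleftrightarrow> lmodule R P \<and>
     (\<forall>(A :: ('r, 'u) module) (B :: ('r, 'u) module) (C :: ('r, 'u) module) \<alpha> \<beta>.
        n_exact_seq R n A B C \<alpha> \<beta> \<longrightarrow> hom_exact R P A B C \<alpha> \<beta>)"

definition cochain_complex :: "'r ring \<Rightarrow> (int \<Rightarrow> ('r, 'a) module) \<Rightarrow> (int \<Rightarrow> 'a \<Rightarrow> 'a) \<Rightarrow> bool" where
  "cochain_complex R X d \<longleftrightarrow> (\<forall>i. lmodule R (X i) \<and> lhom R (X i) (X (i + 1)) (d i)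
     \<and> (\<forall>x\<in>carrier (X i). d (i + 1) (d i x) = \<zero>\<^bsub>X (i + 2)\<^esub>))"

definition bounded_above :: "(int \<Rightarrow> ('r, 'a) module) \<Rightarrow> bool" where
  "bounded_above X \<longleftrightarrow> (\<exists>N. \<forall>i>N. carrier (X i) = {\<zero>\<^bsub>X i\<^esub>})"

definition chain_map :: "'r ring \<Rightarrow> (int \<Rightarrow> ('r, 'a) module) \<Rightarrow> (int \<Rightarrow> 'a \<Rightarrow> 'a)
    \<Rightarrow> (int \<Rightarrow> ('r, 'b) module) \<Rightarrow> (int \<Rightarrow> 'b \<Rightarrow> 'b) \<Rightarrow> (int \<Rightarrow> 'a \<Rightarrow> 'b) \<Rightarrow> bool" where
  "chain_map R X dX Y dY f \<longleftrightarrow> (\<forall>i. lhom R (X i) (Y i) (f i)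
     \<and> (\<forall>x\<in>carrier (X i). f (i + 1) (dX i x) = dY i (f i x)))"

text \<open>n-exact complexes: Hom(P, Z) exact for all P in P^{<n+1}.\<close>

definition n_exact_complex :: "'r ring \<Rightarrow> enat \<Rightarrow> (int \<Rightarrow> ('r, 'a) module) \<Rightarrow> (int \<Rightarrow> 'a \<Rightarrow> 'a) \<Rightarrow> bool" where
  "n_exact_complex R n Z d \<longleftrightarrow>
     (\<forall>M :: ('r, 'r tmod) module. fp_class R (n + 1) M \<longrightarrow>
        (\<forall>i g. lhom R M (Z i) g \<and> (\<forall>x\<in>carrier M. d i (g x) = \<zero>\<^bsub>Z (i + 1)\<^esub>)
           \<longrightarrow> (\<exists>h. lhom R M (Z (i - 1)) h \<and> (\<forall>x\<in>carrier M. d (i - 1) (h x) = g x))))"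

definition dsum :: "('r, 'a) module \<Rightarrow> ('r, 'b) module \<Rightarrow> ('r, 'a \<times> 'b) module" where
  "dsum A B = \<lparr>carrier = carrier A \<times> carrier B,
     mult = (\<lambda>_ _. undefined), one = undefined,
     zero = (\<zero>\<^bsub>A\<^esub>, \<zero>\<^bsub>B\<^esub>),
     add = (\<lambda>(a, b) (a', b'). (a \<oplus>\<^bsub>A\<^esub> a', b \<oplus>\<^bsub>B\<^esub> b')),
     smult = (\<lambda>r (a, b). (r \<odot>\<^bsub>A\<^esub> a, r \<odot>\<^bsub>B\<^esub> b))\<rparr>"

definition cone_mod :: "(int \<Rightarrow> ('r, 'a) module) \<Rightarrow> (int \<Rightarrow> ('r, 'b) module) \<Rightarrow> int \<Rightarrow> ('r, 'a \<times> 'b) module" where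
  "cone_mod X Y i = dsum (X (i + 1)) (Y i)"

definition cone_d :: "(int \<Rightarrow> ('r, 'a) module) \<Rightarrow> (int \<Rightarrow> 'a \<Rightarrow> 'a) \<Rightarrow> (int \<Rightarrow> ('r, 'b) module)
    \<Rightarrow> (int \<Rightarrow> 'b \<Rightarrow> 'b) \<Rightarrow> (int \<Rightarrow> 'a \<Rightarrow> 'b) \<Rightarrow> int \<Rightarrow> 'a \<times> 'b \<Rightarrow> 'a \<times> 'b" where
  "cone_d X dX Y dY f i = (\<lambda>(x, y). (\<ominus>\<^bsub>X (i + 2)\<^esub> (dX (i + 1) x), f (i + 1) x \<oplus>\<^bsub>Y (i + 1)\<^esub> dY i y))"

definition n_quasi_iso :: "'r ring \<Rightarrow> enat \<Rightarrow> (int \<Rightarrow> ('r, 'a) module) \<Rightarrow> (int \<Rightarrow> 'a \<Rightarrow> 'a)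
    \<Rightarrow> (int \<Rightarrow> ('r, 'b) module) \<Rightarrow> (int \<Rightarrow> 'b \<Rightarrow> 'b) \<Rightarrow> (int \<Rightarrow> 'a \<Rightarrow> 'b) \<Rightarrow> bool" where
  "n_quasi_iso R n X dX Y dY f \<longleftrightarrow> chain_map R X dX Y dY f
     \<and> n_exact_complex R n (cone_mod X Y) (cone_d X dX Y dY f)"

definition homotopic :: "'r ring \<Rightarrow> (int \<Rightarrow> ('r, 'a) module) \<Rightarrow> (int \<Rightarrow> 'a \<Rightarrow> 'a)
    \<Rightarrow> (int \<Rightarrow> ('r, 'b) module) \<Rightarrow> (int \<Rightarrow> 'b \<Rightarrow> 'b) \<Rightarrow> (int \<Rightarrow> 'a \<Rightarrow> 'b) \<Rightarrow> (int \<Rightarrow> 'a \<Rightarrow> 'b) \<Rightarrow> bool" where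
  "homotopic R X dX Y dY f g \<longleftrightarrow> (\<exists>s. (\<forall>i. lhom R (X i) (Y (i - 1)) (s i))
     \<and> (\<forall>i. \<forall>x\<in>carrier (X i).
          f i x = g i x \<oplus>\<^bsub>Y i\<^esub> dY (i - 1) (s i x) \<oplus>\<^bsub>Y i\<^esub> s (i + 1) (dX i x)))"

definition homotopy_equivalence :: "'r ring \<Rightarrow> (int \<Rightarrow> ('r, 'a) module) \<Rightarrow> (int \<Rightarrow> 'a \<Rightarrow> 'a)
    \<Rightarrow> (int \<Rightarrow> ('r, 'b) module) \<Rightarrow> (int \<Rightarrow> 'b \<Rightarrow> 'b) \<Rightarrow> (int \<Rightarrow> 'a \<Rightarrow> 'b) \<Rightarrow> bool" where
  "homotopy_equivalence R X dX Y dY f \<longleftrightarrow> chain_map R X dX Y dY f \<and>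
     (\<exists>g. chain_map R Y dY X dX g
        \<and> homotopic R X dX X dX (\<lambda>i. g i \<circ> f i) (\<lambda>i. id)
        \<and> homotopic R Y dY Y dY (\<lambda>i. f i \<circ> g i) (\<lambda>i. id))"

end

theory Submission
  imports Defs
begin

text \<open>The mapping cone \<open>C\<close> of \<open>f\<close> is bounded above, it is \<open>n\<close>-exact, and its terms
  \<open>X\<^bsup>i+1\<^esup> \<oplus> Y\<^bsup>i\<^esup>\<close> lift along the epimorphisms of \<open>n\<close>-exact sequences. Testing
  \<open>n\<close>-exactness on the regular module shows that \<open>C\<close> is exact, so every sequence of cycles
  \<open>0 \<rightarrow> Z\<^bsup>i\<^esup> \<rightarrow> C\<^bsup>i\<^esup> \<rightarrow> Z\<^bsup>i+1\<^esup> \<rightarrow> 0\<close> is \<open>n\<close>-exact. Above the bound \<open>Z\<^bsup>i+1\<^esup> = 0\<close>;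
  descending from there, a section of \<open>d\<^bsup>i+1\<^esup>\<close> yields a retraction \<open>C\<^bsup>i+1\<^esup> \<rightarrow> Z\<^bsup>i+1\<^esup>\<close>,
  which lifts along \<open>d\<^bsup>i\<^esup>\<close> to a section of \<open>d\<^bsup>i\<^esup> : C\<^bsup>i\<^esup> \<rightarrow> Z\<^bsup>i+1\<^esup>\<close>. These sections
  assemble to a contracting homotopy of \<open>C\<close>, and the components of a contracting homotopy of
  the cone are a homotopy inverse of \<open>f\<close> together with the two homotopies.\<close>

lemma (in abelian_group) add_neg_add_neg_eqD:
  assumes "u \<oplus> \<ominus> a \<oplus> \<ominus> b = y" "u \<in> carrier G" "a \<in> carrier G" "b \<in> carrier G"
  shows "u = y \<oplus> a \<oplus> b"
proof -
  have "y \<oplus> a \<oplus> b = u \<oplus> (\<ominus> a \<oplus> a) \<oplus> (\<ominus> b \<oplus> b)"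
    unfolding assms(1)[symmetric] using assms(2-4) by (simp add: a_ac)
  then show ?thesis using assms(2-4) by (simp add: l_neg)
qed

lemma lmoduleD:
  assumes "lmodule R M"
  shows "ring R" "abelian_group M"
    "\<And>a x. a \<in> carrier R \<Longrightarrow> x \<in> carrier M \<Longrightarrow> a \<odot>\<^bsub>M\<^esub> x \<in> carrier M"
    "\<And>a b x. a \<in> carrier R \<Longrightarrow> b \<in> carrier R \<Longrightarrow> x \<in> carrier M \<Longrightarrow>
      (a \<oplus>\<^bsub>R\<^esub> b) \<odot>\<^bsub>M\<^esub> x = a \<odot>\<^bsub>M\<^esub> x \<oplus>\<^bsub>M\<^esub> b \<odot>\<^bsub>M\<^esub> x"
    "\<And>a x y. a \<in> carrier R \<Longrightarrow> x \<in> carrier M \<Longrightarrow> y \<in> carrier M \<Longrightarrow>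
      a \<odot>\<^bsub>M\<^esub> (x \<oplus>\<^bsub>M\<^esub> y) = a \<odot>\<^bsub>M\<^esub> x \<oplus>\<^bsub>M\<^esub> a \<odot>\<^bsub>M\<^esub> y"
    "\<And>a b x. a \<in> carrier R \<Longrightarrow> b \<in> carrier R \<Longrightarrow> x \<in> carrier M \<Longrightarrow>
      (a \<otimes>\<^bsub>R\<^esub> b) \<odot>\<^bsub>M\<^esub> x = a \<odot>\<^bsub>M\<^esub> (b \<odot>\<^bsub>M\<^esub> x)"
    "\<And>x. x \<in> carrier M \<Longrightarrow> \<one>\<^bsub>R\<^esub> \<odot>\<^bsub>M\<^esub> x = x"
  using assms unfolding lmodule_def module_axioms_def by auto

lemma lmodule_smult_zero:
  assumes "lmodule R M" "a \<in> carrier R"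
  shows "a \<odot>\<^bsub>M\<^esub> \<zero>\<^bsub>M\<^esub> = \<zero>\<^bsub>M\<^esub>"
proof -
  interpret M: abelian_group M by (rule lmoduleD(2)[OF assms(1)])
  have c: "a \<odot>\<^bsub>M\<^esub> \<zero>\<^bsub>M\<^esub> \<in> carrier M" using lmoduleD(3)[OF assms] by simp
  have "a \<odot>\<^bsub>M\<^esub> \<zero>\<^bsub>M\<^esub> \<oplus>\<^bsub>M\<^esub> a \<odot>\<^bsub>M\<^esub> \<zero>\<^bsub>M\<^esub> = a \<odot>\<^bsub>M\<^esub> \<zero>\<^bsub>M\<^esub> \<oplus>\<^bsub>M\<^esub> \<zero>\<^bsub>M\<^esub>"
    using lmoduleD(5)[OF assms, of "\<zero>\<^bsub>M\<^esub>" "\<zero>\<^bsub>M\<^esub>"] c by simp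
  then show ?thesis using c by simp
qed

lemma lmodule_smult_neg:
  assumes "lmodule R M" "a \<in> carrier R" "x \<in> carrier M"
  shows "a \<odot>\<^bsub>M\<^esub> (\<ominus>\<^bsub>M\<^esub> x) = \<ominus>\<^bsub>M\<^esub> (a \<odot>\<^bsub>M\<^esub> x)"
proof -
  interpret M: abelian_group M by (rule lmoduleD(2)[OF assms(1)])
  have "a \<odot>\<^bsub>M\<^esub> (\<ominus>\<^bsub>M\<^esub> x) \<oplus>\<^bsub>M\<^esub> a \<odot>\<^bsub>M\<^esub> x = \<zero>\<^bsub>M\<^esub>"
    using lmoduleD(5)[OF assms(1,2), of "\<ominus>\<^bsub>M\<^esub> x" x, symmetric] assms
    by (simp add: M.l_neg lmodule_smult_zero)
  then show ?thesis using assms lmoduleD(3)[OF assms(1)]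
    by (metis M.a_inv_closed M.minus_equality)
qed

lemma submodule_lmodule:
  assumes "lmodule R M" "H \<subseteq> carrier M" "\<zero>\<^bsub>M\<^esub> \<in> H"
    "\<And>x y. x \<in> H \<Longrightarrow> y \<in> H \<Longrightarrow> x \<oplus>\<^bsub>M\<^esub> y \<in> H"
    "\<And>x. x \<in> H \<Longrightarrow> \<ominus>\<^bsub>M\<^esub> x \<in> H"
    "\<And>a x. a \<in> carrier R \<Longrightarrow> x \<in> H \<Longrightarrow> a \<odot>\<^bsub>M\<^esub> x \<in> H"
  shows "lmodule R (M\<lparr>carrier := H\<rparr>)"
proof -
  interpret M: abelian_group M by (rule lmoduleD(2)[OF assms(1)])
  have "abelian_group (M\<lparr>carrier := H\<rparr>)"
    by (rule abelian_groupI)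
      (use assms(2-5) in \<open>auto intro!: bexI[of _ "\<ominus>\<^bsub>M\<^esub> _"] M.l_neg M.a_assoc M.a_comm\<close>)
  then show ?thesis unfolding lmodule_def module_axioms_def
    using lmoduleD[OF assms(1)] assms(2,6) by (auto simp: subset_iff)
qed

lemma lhomD:
  assumes "lhom R M N h"
  shows "\<And>x. x \<in> carrier M \<Longrightarrow> h x \<in> carrier N"
    "\<And>x y. x \<in> carrier M \<Longrightarrow> y \<in> carrier M \<Longrightarrow> h (x \<oplus>\<^bsub>M\<^esub> y) = h x \<oplus>\<^bsub>N\<^esub> h y"
    "\<And>r x. r \<in> carrier R \<Longrightarrow> x \<in> carrier M \<Longrightarrow> h (r \<odot>\<^bsub>M\<^esub> x) = r \<odot>\<^bsub>N\<^esub> h x"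
  using assms unfolding lhom_def by auto

lemma lhom_zero:
  assumes "lhom R M N h" "abelian_group M" "abelian_group N"
  shows "h \<zero>\<^bsub>M\<^esub> = \<zero>\<^bsub>N\<^esub>"
proof -
  interpret M: abelian_group M by fact
  interpret N: abelian_group N by fact
  have c: "h \<zero>\<^bsub>M\<^esub> \<in> carrier N" using lhomD(1)[OF assms(1)] by simp
  have "h \<zero>\<^bsub>M\<^esub> \<oplus>\<^bsub>N\<^esub> h \<zero>\<^bsub>M\<^esub> = h \<zero>\<^bsub>M\<^esub> \<oplus>\<^bsub>N\<^esub> \<zero>\<^bsub>N\<^esub>"
    using lhomD(2)[OF assms(1), of "\<zero>\<^bsub>M\<^esub>" "\<zero>\<^bsub>M\<^esub>"] c by simp
  then show ?thesis using c by simp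
qed

lemma lhom_neg:
  assumes "lhom R M N h" "abelian_group M" "abelian_group N" "x \<in> carrier M"
  shows "h (\<ominus>\<^bsub>M\<^esub> x) = \<ominus>\<^bsub>N\<^esub> h x"
proof -
  interpret M: abelian_group M by fact
  interpret N: abelian_group N by fact
  have "h (\<ominus>\<^bsub>M\<^esub> x) \<oplus>\<^bsub>N\<^esub> h x = \<zero>\<^bsub>N\<^esub>"
    using lhomD(2)[OF assms(1), of "\<ominus>\<^bsub>M\<^esub> x" x, symmetric] assms
    by (simp add: M.l_neg lhom_zero)
  then show ?thesis using assms lhomD(1)[OF assms(1)]
    by (metis M.a_inv_closed N.minus_equality)
qed

lemma lhom_minus:
  assumes "lhom R M N h" "abelian_group M" "abelian_group N" "x \<in> carrier M" "y \<in> carrier M"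
  shows "h (x \<ominus>\<^bsub>M\<^esub> y) = h x \<ominus>\<^bsub>N\<^esub> h y"
proof -
  interpret M: abelian_group M by fact
  interpret N: abelian_group N by fact
  show ?thesis using assms lhomD(2)[OF assms(1)] lhom_neg[OF assms(1-3)]
    by (simp add: M.minus_eq N.minus_eq)
qed

lemma lhom_comp:
  assumes "lhom R M N h" "lhom R N P k"
  shows "lhom R M P (\<lambda>x. k (h x))"
  using assms unfolding lhom_def by (auto simp: Pi_def)

lemma lhom_const_zero:
  assumes "lmodule R N"
  shows "lhom R M N (\<lambda>_. \<zero>\<^bsub>N\<^esub>)"
proof -
  interpret N: abelian_group N by (rule lmoduleD(2)[OF assms])
  show ?thesis unfolding lhom_def using lmodule_smult_zero[OF assms] by auto
qed

lemma lhom_uminus: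
  assumes "lhom R M N h" "lmodule R N"
  shows "lhom R M N (\<lambda>x. \<ominus>\<^bsub>N\<^esub> h x)"
proof -
  interpret N: abelian_group N by (rule lmoduleD(2)[OF assms(2)])
  show ?thesis unfolding lhom_def using lhomD[OF assms(1)]
    by (auto simp: N.minus_add N.a_comm lmodule_smult_neg[OF assms(2)])
qed

lemma lhom_add:
  assumes "lhom R M N h" "lhom R M N k" "lmodule R N"
  shows "lhom R M N (\<lambda>x. h x \<oplus>\<^bsub>N\<^esub> k x)"
proof -
  interpret N: abelian_group N by (rule lmoduleD(2)[OF assms(3)])
  show ?thesis unfolding lhom_def using lhomD[OF assms(1)] lhomD[OF assms(2)]
    by (auto simp: N.a_ac lmoduleD(5)[OF assms(3)])
qed

lemma lhom_diff:
  assumes "lhom R M N h" "lhom R M N k" "lmodule R N"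
  shows "lhom R M N (\<lambda>x. h x \<ominus>\<^bsub>N\<^esub> k x)"
  using lhom_add[OF assms(1) lhom_uminus[OF assms(2,3)] assms(3)] by (simp add: a_minus_def)

lemma lhom_restrict_domain:
  assumes "lhom R M N h" "H \<subseteq> carrier M"
  shows "lhom R (M\<lparr>carrier := H\<rparr>) N h"
  using assms unfolding lhom_def by (auto simp: Pi_def subset_iff)

lemma lhom_restrict_codomain_iff:
  assumes "H \<subseteq> carrier N"
  shows "lhom R M (N\<lparr>carrier := H\<rparr>) h \<longleftrightarrow> lhom R M N h \<and> h ` carrier M \<subseteq> H"
  using assms unfolding lhom_def by (auto simp: Pi_def)

lemma dsum_simps [simp]:
  "carrier (dsum A B) = carrier A \<times> carrier B"
  "\<zero>\<^bsub>dsum A B\<^esub> = (\<zero>\<^bsub>A\<^esub>, \<zero>\<^bsub>B\<^esub>)"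
  "(a, b) \<oplus>\<^bsub>dsum A B\<^esub> (a', b') = (a \<oplus>\<^bsub>A\<^esub> a', b \<oplus>\<^bsub>B\<^esub> b')"
  "r \<odot>\<^bsub>dsum A B\<^esub> (a, b) = (r \<odot>\<^bsub>A\<^esub> a, r \<odot>\<^bsub>B\<^esub> b)"
  unfolding dsum_def by simp_all

lemma dsum_lmodule:
  assumes "lmodule R A" "lmodule R B"
  shows "lmodule R (dsum A B)"
proof -
  interpret A: abelian_group A by (rule lmoduleD(2)[OF assms(1)])
  interpret B: abelian_group B by (rule lmoduleD(2)[OF assms(2)])
  have "abelian_group (dsum A B)"
    by (rule abelian_groupI) (auto simp: A.a_ac B.a_ac)
  then show ?thesis unfolding lmodule_def module_axioms_def
    using lmoduleD[OF assms(1)] lmoduleD[OF assms(2)] by auto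
qed

lemma lhom_dsum_inl:
  assumes "lmodule R B"
  shows "lhom R A (dsum A B) (\<lambda>x. (x, \<zero>\<^bsub>B\<^esub>))"
proof -
  interpret B: abelian_group B by (rule lmoduleD(2)[OF assms])
  show ?thesis unfolding lhom_def using lmodule_smult_zero[OF assms] by auto
qed

lemma lhom_dsum_inr:
  assumes "lmodule R A"
  shows "lhom R B (dsum A B) (\<lambda>y. (\<zero>\<^bsub>A\<^esub>, y))"
proof -
  interpret A: abelian_group A by (rule lmoduleD(2)[OF assms])
  show ?thesis unfolding lhom_def using lmodule_smult_zero[OF assms] by auto
qed

lemma lhom_dsum_fst: "lhom R (dsum A B) A fst"
  unfolding lhom_def by auto

lemma lhom_dsum_snd: "lhom R (dsum A B) B snd"
  unfolding lhom_def by auto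

lemma fst_dsum_add: "fst (p \<oplus>\<^bsub>dsum A B\<^esub> q) = fst p \<oplus>\<^bsub>A\<^esub> fst q"
  by (simp add: dsum_def split_beta)

lemma lhom_into_dsum:
  assumes "lhom R M A h" "lhom R M B k"
  shows "lhom R M (dsum A B) (\<lambda>x. (h x, k x))"
  using assms unfolding lhom_def by auto

section \<open>Lifting along n-exact sequences\<close>

text \<open>The surjectivity clause of \<^const>\<open>hom_exact\<close>, which is all the contraction argument uses.\<close>

definition lifts_n_exact :: "'r ring \<Rightarrow> enat \<Rightarrow> 'u itself \<Rightarrow> ('r, 'p) module \<Rightarrow> bool" where
  "lifts_n_exact R n U P \<longleftrightarrow>
     (\<forall>(A :: ('r, 'u) module) (B :: ('r, 'u) module) (C :: ('r, 'u) module) \<alpha> \<beta> g.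
        n_exact_seq R n A B C \<alpha> \<beta> \<and> lhom R P C g
        \<longrightarrow> (\<exists>h. lhom R P B h \<and> (\<forall>x\<in>carrier P. \<beta> (h x) = g x)))"

lemma n_projective_lifts_n_exact:
  assumes "n_projective R n U P"
  shows "lifts_n_exact R n U P"
  using assms unfolding n_projective_def hom_exact_def lifts_n_exact_def by blast

lemma lifts_n_exact_dsum:
  fixes R :: "'r ring" and U :: "'u itself"
  assumes "lmodule R P" "lmodule R Q" "lifts_n_exact R n U P" "lifts_n_exact R n U Q"
  shows "lifts_n_exact R n U (dsum P Q)"
  unfolding lifts_n_exact_def
proof (intro allI impI, elim conjE)
  fix A B C :: "('r, 'u) module" and \<alpha> \<beta> g
  assume ex: "n_exact_seq R n A B C \<alpha> \<beta>" and g: "lhom R (dsum P Q) C g"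
  have lB: "lmodule R B" and lC: "lmodule R C" and \<beta>: "lhom R B C \<beta>"
    using ex unfolding n_exact_seq_def short_exact_def by auto
  interpret P: abelian_group P by (rule lmoduleD(2)[OF assms(1)])
  interpret Q: abelian_group Q by (rule lmoduleD(2)[OF assms(2)])
  interpret B: abelian_group B by (rule lmoduleD(2)[OF lB])
  obtain h1 where h1: "lhom R P B h1" "\<forall>x\<in>carrier P. \<beta> (h1 x) = g (x, \<zero>\<^bsub>Q\<^esub>)"
    using assms(3) ex lhom_comp[OF lhom_dsum_inl[OF assms(2)] g]
    unfolding lifts_n_exact_def by blast
  obtain h2 where h2: "lhom R Q B h2" "\<forall>y\<in>carrier Q. \<beta> (h2 y) = g (\<zero>\<^bsub>P\<^esub>, y)"
    using assms(4) ex lhom_comp[OF lhom_dsum_inr[OF assms(1)] g]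
    unfolding lifts_n_exact_def by blast
  define h where "h = (\<lambda>(x, y). h1 x \<oplus>\<^bsub>B\<^esub> h2 y)"
  have "lhom R (dsum P Q) B h"
    unfolding lhom_def h_def using lhomD[OF h1(1)] lhomD[OF h2(1)] lmoduleD(5)[OF lB]
    by (auto simp: B.a_ac)
  moreover have "\<beta> (h z) = g z" if z: "z \<in> carrier (dsum P Q)" for z
  proof -
    obtain x y where xy: "z = (x, y)" "x \<in> carrier P" "y \<in> carrier Q" using z by auto
    have "\<beta> (h z) = g (x, \<zero>\<^bsub>Q\<^esub>) \<oplus>\<^bsub>C\<^esub> g (\<zero>\<^bsub>P\<^esub>, y)"
      unfolding h_def using xy h1 h2 lhomD[OF \<beta>] lhomD[OF h1(1)] lhomD[OF h2(1)] by simp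
    also have "\<dots> = g ((x, \<zero>\<^bsub>Q\<^esub>) \<oplus>\<^bsub>dsum P Q\<^esub> (\<zero>\<^bsub>P\<^esub>, y))"
      using lhomD(2)[OF g, of "(x, \<zero>\<^bsub>Q\<^esub>)" "(\<zero>\<^bsub>P\<^esub>, y)"] xy by simp
    also have "\<dots> = g z" using xy by simp
    finally show ?thesis .
  qed
  ultimately show "\<exists>h. lhom R (dsum P Q) B h \<and> (\<forall>x\<in>carrier (dsum P Q). \<beta> (h x) = g x)"
    by blast
qed

text \<open>The regular module \<open>R\<close>, transported to the carrier type \<^typ>\<open>'r tmod\<close> of the test
  modules along the injection \<open>r \<mapsto> {\<lambda>_. r}\<close>.\<close>

definition emb :: "'r \<Rightarrow> 'r tmod" where
  "emb r = {\<lambda>_. r}"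

definition dec :: "'r tmod \<Rightarrow> 'r" where
  "dec A = (THE r. A = emb r)"

lemma emb_inject [simp]: "emb a = emb b \<longleftrightarrow> a = b"
  unfolding emb_def by (auto dest: fun_cong)

lemma dec_emb [simp]: "dec (emb r) = r"
  unfolding dec_def by auto

definition regular_module :: "'r ring \<Rightarrow> ('r, 'r tmod) module" where
  "regular_module R = \<lparr>carrier = emb ` carrier R, mult = (\<lambda>_ _. undefined), one = undefined,
     zero = emb \<zero>\<^bsub>R\<^esub>, add = (\<lambda>a b. emb (dec a \<oplus>\<^bsub>R\<^esub> dec b)),
     smult = (\<lambda>r a. emb (r \<otimes>\<^bsub>R\<^esub> dec a))\<rparr>"

definition zero_module :: "'r ring \<Rightarrow> ('r, 'r tmod) module" where
  "zero_module R = (regular_module R)\<lparr>carrier := {emb \<zero>\<^bsub>R\<^esub>}\<rparr>"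

lemma regular_module_simps [simp]:
  "carrier (regular_module R) = emb ` carrier R"
  "\<zero>\<^bsub>regular_module R\<^esub> = emb \<zero>\<^bsub>R\<^esub>"
  "a \<oplus>\<^bsub>regular_module R\<^esub> b = emb (dec a \<oplus>\<^bsub>R\<^esub> dec b)"
  "r \<odot>\<^bsub>regular_module R\<^esub> a = emb (r \<otimes>\<^bsub>R\<^esub> dec a)"
  unfolding regular_module_def by simp_all

lemma zero_module_simps [simp]:
  "carrier (zero_module R) = {emb \<zero>\<^bsub>R\<^esub>}"
  "\<zero>\<^bsub>zero_module R\<^esub> = emb \<zero>\<^bsub>R\<^esub>"
  unfolding zero_module_def by simp_all

lemma regular_module_lmodule:
  assumes "ring R"
  shows "lmodule R (regular_module R)"
proof -
  interpret R: ring R by fact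
  have "abelian_group (regular_module R)"
    by (rule abelian_groupI) (auto simp: R.a_ac)
  then show ?thesis unfolding lmodule_def module_axioms_def
    using assms by (auto simp: R.l_distr R.r_distr R.m_assoc)
qed

lemma zero_module_lmodule:
  assumes "ring R"
  shows "lmodule R (zero_module R)"
proof -
  interpret R: ring R by fact
  interpret M: abelian_group "regular_module R"
    by (rule lmoduleD(2)[OF regular_module_lmodule[OF assms]])
  have "\<ominus>\<^bsub>regular_module R\<^esub> (emb \<zero>\<^bsub>R\<^esub>) = emb \<zero>\<^bsub>R\<^esub>"
    by (rule M.minus_equality) auto
  then show ?thesis unfolding zero_module_def
    by (intro submodule_lmodule[OF regular_module_lmodule[OF assms]]) auto
qed

lemma lhom_regular_module_smult:
  assumes "lmodule R M" "z \<in> carrier M"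
  shows "lhom R (regular_module R) M (\<lambda>m. dec m \<odot>\<^bsub>M\<^esub> z)"
  unfolding lhom_def using lmoduleD(3,4,6)[OF assms(1)] assms(2) by auto

lemma regular_module_fin_gen:
  assumes "ring R"
  shows "fin_gen R (regular_module R)"
proof -
  interpret R: ring R by fact
  have "\<exists>rs. set rs \<subseteq> carrier R \<and> length rs = 1 \<and> m = lincomb (regular_module R) rs [emb \<one>\<^bsub>R\<^esub>]"
    if "m \<in> carrier (regular_module R)" for m
    using that by (auto simp: lincomb_def intro!: exI[of _ "[dec m]"])
  then show ?thesis unfolding fin_gen_def
    by (auto intro!: regular_module_lmodule[OF assms] exI[of _ "[emb \<one>\<^bsub>R\<^esub>]"])
qed

lemma zero_module_fin_gen:
  assumes "ring R"
  shows "fin_gen R (zero_module R)"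
  unfolding fin_gen_def using zero_module_lmodule[OF assms]
  by (auto simp: lincomb_def intro!: exI[of _ "[]"])

lemma regular_module_projective:
  fixes R :: "'r ring"
  assumes "ring R"
  shows "projective_mod R (regular_module R)"
  unfolding projective_mod_def
proof (intro conjI regular_module_lmodule[OF assms] allI impI, elim conjE)
  interpret R: ring R by fact
  fix A B :: "('r, 'r tmod) module" and g h
  assume A: "lmodule R A" and B: "lmodule R B" and g: "lhom R A B g"
    and onto: "g ` carrier A = carrier B" and h: "lhom R (regular_module R) B h"
  have "h (emb \<one>\<^bsub>R\<^esub>) \<in> g ` carrier A" using lhomD(1)[OF h] onto by simp
  then obtain a where a: "a \<in> carrier A" "g a = h (emb \<one>\<^bsub>R\<^esub>)" by auto
  have "g (dec m \<odot>\<^bsub>A\<^esub> a) = h m" if m: "m \<in> carrier (regular_module R)" for m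
  proof -
    obtain r where r: "r \<in> carrier R" "m = emb r" using m by auto
    have "g (dec m \<odot>\<^bsub>A\<^esub> a) = r \<odot>\<^bsub>B\<^esub> h (emb \<one>\<^bsub>R\<^esub>)"
      using lhomD(3)[OF g r(1) a(1)] a(2) r by simp
    also have "\<dots> = h (r \<odot>\<^bsub>regular_module R\<^esub> emb \<one>\<^bsub>R\<^esub>)"
      using lhomD(3)[OF h r(1), of "emb \<one>\<^bsub>R\<^esub>"] by simp
    finally show ?thesis using r by simp
  qed
  then show "\<exists>l. lhom R (regular_module R) A l \<and> (\<forall>m\<in>carrier (regular_module R). g (l m) = h m)"
    using lhom_regular_module_smult[OF A a(1)] by blast
qed

lemma zero_module_projective:
  fixes R :: "'r ring"
  assumes "ring R"
  shows "projective_mod R (zero_module R)"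
  unfolding projective_mod_def
proof (intro conjI zero_module_lmodule[OF assms] allI impI, elim conjE)
  fix A B :: "('r, 'r tmod) module" and g h
  assume A: "lmodule R A" and B: "lmodule R B" and g: "lhom R A B g"
    and h: "lhom R (zero_module R) B h"
  have "g \<zero>\<^bsub>A\<^esub> = \<zero>\<^bsub>B\<^esub>" "h \<zero>\<^bsub>zero_module R\<^esub> = \<zero>\<^bsub>B\<^esub>"
    using lhom_zero[OF g] lhom_zero[OF h] lmoduleD(2)[OF zero_module_lmodule[OF assms]]
      lmoduleD(2)[OF A] lmoduleD(2)[OF B] by auto
  then show "\<exists>l. lhom R (zero_module R) A l \<and> (\<forall>x\<in>carrier (zero_module R). g (l x) = h x)"
    using lhom_const_zero[OF A] by auto
qed

lemma fp_class_regular_module: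
  fixes R :: "'r ring"
  assumes "ring R" "0 < k"
  shows "fp_class R k (regular_module R)"
proof -
  define P where "P i = (if i = 0 then regular_module R else zero_module R)" for i :: nat
  define dd where "dd i = (\<lambda>_ :: 'r tmod. \<zero>\<^bsub>P i\<^esub>)" for i :: nat
  have P: "lmodule R (P i)" "fin_gen R (P i) \<and> projective_mod R (P i)" for i
    unfolding P_def using assms(1)
    by (simp_all add: regular_module_lmodule zero_module_lmodule regular_module_fin_gen
        zero_module_fin_gen regular_module_projective zero_module_projective)
  have "\<forall>i>0. carrier (P i) = {\<zero>\<^bsub>P i\<^esub>}"
    unfolding P_def by simp
  moreover have "lhom R (P (Suc i)) (P i) (dd i)" for i
    unfolding dd_def by (rule lhom_const_zero[OF P(1)])
  moreover have "lhom R (P 0) (regular_module R) (\<lambda>x. x)"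
    unfolding P_def lhom_def by simp
  moreover have "(\<lambda>x. x) ` carrier (P 0) = carrier (regular_module R)"
    unfolding P_def by simp
  moreover have "{x \<in> carrier (P 0). x = \<zero>\<^bsub>regular_module R\<^esub>} = dd 0 ` carrier (P 1)"
    unfolding P_def dd_def using ring.ring_simprules(2)[OF assms(1)] by auto
  moreover have "{x \<in> carrier (P (Suc i)). dd i x = \<zero>\<^bsub>P i\<^esub>} = dd (Suc i) ` carrier (P (Suc (Suc i)))"
    for i
    unfolding P_def dd_def by simp
  ultimately show ?thesis unfolding fp_class_def
    using regular_module_lmodule[OF assms(1)] assms(2) P(2)
    by (intro conjI exI[of _ 0] exI[of _ P] exI[of _ dd] exI[of _ "\<lambda>x. x"])
      (simp_all add: zero_enat_def)
qed

section \<open>Contractibility of bounded above n-exact complexes\<close>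

text \<open>Index arithmetic is kept in the form \<open>i + c\<close> of \<^const>\<open>cochain_complex\<close> and
  \<^const>\<open>cone_d\<close>; the arithmetic simprocs alone would rewrite \<open>i + 1 + 1\<close> to \<open>2 + i\<close>.\<close>

lemma int_index_simps [simp]:
  "(i :: int) + 1 + 1 = i + 2" "(i :: int) - 1 + 2 = i + 1" "(i :: int) + 2 - 1 = i + 1"
  "(i :: int) + 2 + 1 = i + 3" "(i :: int) + 1 + 2 = i + 3"
  by simp_all

lemma cochain_complexD:
  assumes "cochain_complex R Z d"
  shows "lmodule R (Z i)" "lhom R (Z i) (Z (i + 1)) (d i)"
    "x \<in> carrier (Z i) \<Longrightarrow> d (i + 1) (d i x) = \<zero>\<^bsub>Z (i + 2)\<^esub>"
  using assms unfolding cochain_complex_def by auto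

lemma n_exact_complex_exact:
  assumes "n_exact_complex R n Z d" "cochain_complex R Z d"
    "z \<in> carrier (Z i)" "d i z = \<zero>\<^bsub>Z (i + 1)\<^esub>"
  shows "\<exists>w\<in>carrier (Z (i - 1)). d (i - 1) w = z"
proof -
  note Z = cochain_complexD(1)[OF assms(2)] and d = cochain_complexD(2)[OF assms(2)]
  interpret R: ring R by (rule lmoduleD(1)[OF Z])
  define g where "g m = dec m \<odot>\<^bsub>Z i\<^esub> z" for m
  have g: "lhom R (regular_module R) (Z i) g"
    unfolding g_def by (rule lhom_regular_module_smult[OF Z assms(3)])
  have "d i (g m) = \<zero>\<^bsub>Z (i + 1)\<^esub>" if "m \<in> carrier (regular_module R)" for m
    using that lhomD(3)[OF d] assms(3,4) lmodule_smult_zero[OF Z] by (auto simp: g_def)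
  moreover have "0 < n + 1" by (cases n) (simp_all add: one_enat_def zero_enat_def)
  then have "fp_class R (n + 1) (regular_module R)"
    by (rule fp_class_regular_module[OF R.ring_axioms])
  ultimately obtain h where h: "lhom R (regular_module R) (Z (i - 1)) h"
    "\<forall>m\<in>carrier (regular_module R). d (i - 1) (h m) = g m"
    using assms(1) g unfolding n_exact_complex_def by blast
  have "h (emb \<one>\<^bsub>R\<^esub>) \<in> carrier (Z (i - 1))" using lhomD(1)[OF h(1)] by simp
  moreover have "d (i - 1) (h (emb \<one>\<^bsub>R\<^esub>)) = z"
    using h(2) lmoduleD(7)[OF Z assms(3)] by (simp add: g_def)
  ultimately show ?thesis by blast
qed

definition cycles :: "(int \<Rightarrow> ('r, 'a) module) \<Rightarrow> (int \<Rightarrow> 'a \<Rightarrow> 'a) \<Rightarrow> int \<Rightarrow> ('r, 'a) module" where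
  "cycles Z d i = (Z i)\<lparr>carrier := {z \<in> carrier (Z i). d i z = \<zero>\<^bsub>Z (i + 1)\<^esub>}\<rparr>"

definition cycle_section :: "'r ring \<Rightarrow> (int \<Rightarrow> ('r, 'a) module) \<Rightarrow> (int \<Rightarrow> 'a \<Rightarrow> 'a)
    \<Rightarrow> int \<Rightarrow> ('a \<Rightarrow> 'a) \<Rightarrow> bool" where
  "cycle_section R Z d i \<sigma> \<longleftrightarrow> lhom R (cycles Z d (i + 1)) (Z i) \<sigma>
     \<and> (\<forall>k\<in>carrier (cycles Z d (i + 1)). d i (\<sigma> k) = k)"

definition contractible :: "'r ring \<Rightarrow> (int \<Rightarrow> ('r, 'a) module) \<Rightarrow> (int \<Rightarrow> 'a \<Rightarrow> 'a) \<Rightarrow> bool" where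
  "contractible R Z d \<longleftrightarrow> (\<exists>s. (\<forall>i. lhom R (Z i) (Z (i - 1)) (s i))
     \<and> (\<forall>i. \<forall>z\<in>carrier (Z i). d (i - 1) (s i z) \<oplus>\<^bsub>Z i\<^esub> s (i + 1) (d i z) = z))"

lemma cycles_simps [simp]:
  "carrier (cycles Z d i) = {z \<in> carrier (Z i). d i z = \<zero>\<^bsub>Z (i + 1)\<^esub>}"
  "\<zero>\<^bsub>cycles Z d i\<^esub> = \<zero>\<^bsub>Z i\<^esub>"
  unfolding cycles_def by simp_all

lemma cycles_lmodule:
  assumes "cochain_complex R Z d"
  shows "lmodule R (cycles Z d i)"
proof -
  note Z = cochain_complexD[OF assms]
  interpret Zi: abelian_group "Z i" by (rule lmoduleD(2)[OF Z(1)])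
  interpret Zi1: abelian_group "Z (i + 1)" by (rule lmoduleD(2)[OF Z(1)])
  note d = Z(2)[of i] Zi.abelian_group_axioms Zi1.abelian_group_axioms
  show ?thesis unfolding cycles_def
    by (rule submodule_lmodule[OF Z(1)])
      (use lhomD[OF Z(2)] lhom_zero[OF d] lhom_neg[OF d] lmodule_smult_zero[OF Z(1)]
        lmoduleD(3)[OF Z(1)] in auto)
qed

lemma lhom_into_cycles:
  assumes "cochain_complex R Z d"
  shows "lhom R (Z i) (cycles Z d (i + 1)) (d i)"
  using cochain_complexD[OF assms] lhomD(1)[OF cochain_complexD(2)[OF assms]]
  by (auto simp: cycles_def lhom_restrict_codomain_iff)

lemma n_exact_cycle_sequence:
  fixes R :: "'r ring"
  assumes Z: "cochain_complex R Z d" and ex: "n_exact_complex R n Z d"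
  shows "n_exact_seq R n (cycles Z d i) (Z i) (cycles Z d (i + 1)) (\<lambda>x. x) (d i)"
proof -
  have onto: "d i ` carrier (Z i) = carrier (cycles Z d (i + 1))"
    using lhomD(1)[OF lhom_into_cycles[OF Z]] n_exact_complex_exact[OF ex Z, of _ "i + 1"]
    by (fastforce simp: image_iff)
  have "short_exact R (cycles Z d i) (Z i) (cycles Z d (i + 1)) (\<lambda>x. x) (d i)"
    unfolding short_exact_def using onto
    by (auto simp: cycles_lmodule[OF Z] cochain_complexD[OF Z] lhom_into_cycles[OF Z])
      (auto simp: cycles_def lhom_def)
  moreover have "hom_exact R M (cycles Z d i) (Z i) (cycles Z d (i + 1)) (\<lambda>x. x) (d i)"
    if M: "fp_class R (n + 1) M" for M :: "('r, 'r tmod) module"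
  proof -
    have lift: "\<exists>h. lhom R M (Z (j - 1)) h \<and> (\<forall>x\<in>carrier M. d (j - 1) (h x) = g x)"
      if "lhom R M (Z j) g" "\<forall>x\<in>carrier M. d j (g x) = \<zero>\<^bsub>Z (j + 1)\<^esub>" for j g
      using that ex M unfolding n_exact_complex_def by blast
    have "\<exists>h. lhom R M (Z i) h \<and> (\<forall>x\<in>carrier M. d i (h x) = g x)"
      if "lhom R M (cycles Z d (i + 1)) g" for g
      using that lift[of "i + 1" g] lhomD(1)[OF that]
      by (simp add: cycles_def lhom_restrict_codomain_iff)
    then show ?thesis unfolding hom_exact_def
      by (auto simp: cycles_def lhom_restrict_codomain_iff dest: lhomD(1))
  qed
  ultimately show ?thesis unfolding n_exact_seq_def by blast
qed

lemma cycle_section_retraction: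
  assumes Z: "cochain_complex R Z d" and \<sigma>: "cycle_section R Z d i \<sigma>"
  shows "lhom R (Z i) (cycles Z d i) (\<lambda>z. z \<ominus>\<^bsub>Z i\<^esub> \<sigma> (d i z))"
    and "k \<in> carrier (cycles Z d i) \<Longrightarrow> k \<ominus>\<^bsub>Z i\<^esub> \<sigma> (d i k) = k"
proof -
  note Z = cochain_complexD[OF Z] lhom_into_cycles[OF Z]
  interpret Zi: abelian_group "Z i" by (rule lmoduleD(2)[OF Z(1)])
  interpret Zi1: abelian_group "Z (i + 1)" by (rule lmoduleD(2)[OF Z(1)])
  have \<sigma>d: "lhom R (Z i) (Z i) (\<lambda>z. \<sigma> (d i z))"
    using lhom_comp[OF Z(4)] \<sigma> unfolding cycle_section_def by blast
  have retr: "lhom R (Z i) (Z i) (\<lambda>z. z \<ominus>\<^bsub>Z i\<^esub> \<sigma> (d i z))"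
    by (rule lhom_diff[OF _ \<sigma>d Z(1)]) (simp add: lhom_def)
  have "d i (z \<ominus>\<^bsub>Z i\<^esub> \<sigma> (d i z)) = \<zero>\<^bsub>Z (i + 1)\<^esub>" if z: "z \<in> carrier (Z i)" for z
  proof -
    have "d i z \<in> carrier (cycles Z d (i + 1))" using lhomD(1)[OF Z(4) z] .
    then have "d i (\<sigma> (d i z)) = d i z" using \<sigma> unfolding cycle_section_def by blast
    then show ?thesis
      using lhom_minus[OF Z(2) Zi.abelian_group_axioms Zi1.abelian_group_axioms z
          lhomD(1)[OF \<sigma>d z]] lhomD(1)[OF Z(2) z] by (simp add: Zi1.minus_eq Zi1.r_neg)
  qed
  then show "lhom R (Z i) (cycles Z d i) (\<lambda>z. z \<ominus>\<^bsub>Z i\<^esub> \<sigma> (d i z))"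
    using retr lhomD(1)[OF retr] by (simp add: cycles_def lhom_restrict_codomain_iff image_subset_iff)
  assume k: "k \<in> carrier (cycles Z d i)"
  have "\<sigma> \<zero>\<^bsub>Z (i + 1)\<^esub> = \<zero>\<^bsub>Z i\<^esub>"
    using lhom_zero[OF conjunct1[OF \<sigma>[unfolded cycle_section_def]]
        lmoduleD(2)[OF cycles_lmodule[OF assms(1)]] Zi.abelian_group_axioms] by simp
  then show "k \<ominus>\<^bsub>Z i\<^esub> \<sigma> (d i k) = k" using k by (simp add: Zi.minus_eq)
qed

lemma cycle_section_step:
  fixes R :: "'r ring" and Z :: "int \<Rightarrow> ('r, 'u) module"
  assumes Z: "cochain_complex R Z d" and ex: "n_exact_complex R n Z d"
    and lift: "lifts_n_exact R n TYPE('u) (Z (i + 1))" and \<sigma>: "cycle_section R Z d (i + 1) \<sigma>"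
  shows "\<exists>\<tau>. cycle_section R Z d i \<tau>"
proof -
  obtain \<tau> where \<tau>: "lhom R (Z (i + 1)) (Z i) \<tau>"
    "\<forall>z\<in>carrier (Z (i + 1)). d i (\<tau> z) = z \<ominus>\<^bsub>Z (i + 1)\<^esub> \<sigma> (d (i + 1) z)"
    using lift n_exact_cycle_sequence[OF Z ex, of i] cycle_section_retraction(1)[OF Z \<sigma>]
    unfolding lifts_n_exact_def by blast
  have "lhom R (cycles Z d (i + 1)) (Z i) \<tau>"
    unfolding cycles_def by (rule lhom_restrict_domain[OF \<tau>(1)]) auto
  moreover have "\<forall>k\<in>carrier (cycles Z d (i + 1)). d i (\<tau> k) = k"
    using \<tau>(2) cycle_section_retraction(2)[OF Z \<sigma>] by simp
  ultimately show ?thesis unfolding cycle_section_def by blast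
qed

lemma bounded_above_cycle_section:
  fixes R :: "'r ring" and Z :: "int \<Rightarrow> ('r, 'u) module"
  assumes Z: "cochain_complex R Z d" and bounded: "bounded_above Z"
    and ex: "n_exact_complex R n Z d" and lift: "\<forall>i. lifts_n_exact R n TYPE('u) (Z i)"
  shows "\<exists>\<sigma>. cycle_section R Z d i \<sigma>"
proof -
  obtain N where N: "\<forall>i>N. carrier (Z i) = {\<zero>\<^bsub>Z i\<^esub>}"
    using bounded unfolding bounded_above_def by blast
  have above: "\<exists>\<sigma>. cycle_section R Z d j \<sigma>" if "N \<le> j" for j
  proof -
    have "carrier (cycles Z d (j + 1)) \<subseteq> {\<zero>\<^bsub>Z (j + 1)\<^esub>}" using N that by auto
    then show ?thesis unfolding cycle_section_def
      using lhom_const_zero[OF cochain_complexD(1)[OF Z]]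
        lhom_zero[OF cochain_complexD(2)[OF Z] lmoduleD(2)[OF cochain_complexD(1)[OF Z]]
          lmoduleD(2)[OF cochain_complexD(1)[OF Z]]]
      by blast
  qed
  show ?thesis
  proof (cases "N \<le> i")
    case False
    then have "i \<le> N" by simp
    then show ?thesis
    proof (induction i rule: int_le_induct)
      case base
      then show ?case by (rule above) simp
    next
      case (step i)
      then show ?case using cycle_section_step[OF Z ex, of "i - 1"] lift by auto
    qed
  qed (rule above)
qed

lemma cycle_sections_contractible:
  assumes Z: "cochain_complex R Z d" and \<sigma>: "\<And>i. cycle_section R Z d i (\<sigma> i)"
  shows "contractible R Z d"
proof -
  note Z = cochain_complexD[OF Z] lhom_into_cycles[OF Z] cycles_lmodule[OF Z]
  note \<sigma>_lhom = conjunct1[OF \<sigma>[unfolded cycle_section_def]]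
  note retr = cycle_section_retraction[OF assms(1) \<sigma>]
  define s where "s i z = \<sigma> (i - 1) (z \<ominus>\<^bsub>Z i\<^esub> \<sigma> i (d i z))" for i z
  have "lhom R (Z i) (Z (i - 1)) (s i)" for i
  proof -
    have "lhom R (cycles Z d i) (Z (i - 1)) (\<sigma> (i - 1))" using \<sigma>_lhom[of "i - 1"] by simp
    from lhom_comp[OF retr(1) this] show ?thesis unfolding s_def .
  qed
  moreover have "d (i - 1) (s i z) \<oplus>\<^bsub>Z i\<^esub> s (i + 1) (d i z) = z"
    if z: "z \<in> carrier (Z i)" for i z
  proof -
    interpret Zi: abelian_group "Z i" by (rule lmoduleD(2)[OF Z(1)])
    have dz: "d i z \<in> carrier (cycles Z d (i + 1))" using lhomD(1)[OF Z(4) z] .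
    have "d (i - 1) (s i z) = z \<ominus>\<^bsub>Z i\<^esub> \<sigma> i (d i z)"
      using \<sigma>[of "i - 1"] lhomD(1)[OF retr(1) z] unfolding s_def cycle_section_def by simp
    moreover have "s (i + 1) (d i z) = \<sigma> i (d i z)"
      using retr(2)[OF dz] unfolding s_def by simp
    moreover have "\<sigma> i (d i z) \<in> carrier (Z i)" using lhomD(1)[OF \<sigma>_lhom dz] .
    ultimately show ?thesis using z by (simp add: Zi.minus_eq Zi.a_assoc Zi.l_neg)
  qed
  ultimately show ?thesis unfolding contractible_def by blast
qed

lemma n_exact_contractible:
  fixes R :: "'r ring" and Z :: "int \<Rightarrow> ('r, 'u) module"
  assumes "cochain_complex R Z d" "bounded_above Z"
    "n_exact_complex R n Z d" "\<forall>i. lifts_n_exact R n TYPE('u) (Z i)"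
  shows "contractible R Z d"
proof -
  obtain \<sigma> where "\<And>i. cycle_section R Z d i (\<sigma> i)"
    using bounded_above_cycle_section[OF assms] by metis
  then show ?thesis by (rule cycle_sections_contractible[OF assms(1)])
qed

section \<open>The mapping cone\<close>

lemma cone_mod_simps [simp]:
  "carrier (cone_mod X Y i) = carrier (X (i + 1)) \<times> carrier (Y i)"
  "\<zero>\<^bsub>cone_mod X Y i\<^esub> = (\<zero>\<^bsub>X (i + 1)\<^esub>, \<zero>\<^bsub>Y i\<^esub>)"
  "(a, b) \<oplus>\<^bsub>cone_mod X Y i\<^esub> (a', b') = (a \<oplus>\<^bsub>X (i + 1)\<^esub> a', b \<oplus>\<^bsub>Y i\<^esub> b')"
  unfolding cone_mod_def by simp_all

lemma cone_d_Pair [simp]: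
  "cone_d X dX Y dY f i (x, y) = (\<ominus>\<^bsub>X (i + 2)\<^esub> dX (i + 1) x, f (i + 1) x \<oplus>\<^bsub>Y (i + 1)\<^esub> dY i y)"
  unfolding cone_d_def by simp

lemma bounded_above_cone:
  assumes "bounded_above X" "bounded_above Y"
  shows "bounded_above (cone_mod X Y)"
proof -
  obtain NX NY where "\<forall>i>NX. carrier (X i) = {\<zero>\<^bsub>X i\<^esub>}" "\<forall>i>NY. carrier (Y i) = {\<zero>\<^bsub>Y i\<^esub>}"
    using assms unfolding bounded_above_def by blast
  then have "\<forall>i>max NX NY. carrier (cone_mod X Y i) = {\<zero>\<^bsub>cone_mod X Y i\<^esub>}" by auto
  then show ?thesis unfolding bounded_above_def by blast
qed

locale chain_map_cone =
  fixes R :: "'r ring"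
    and X :: "int \<Rightarrow> ('r, 'a) module" and dX :: "int \<Rightarrow> 'a \<Rightarrow> 'a"
    and Y :: "int \<Rightarrow> ('r, 'b) module" and dY :: "int \<Rightarrow> 'b \<Rightarrow> 'b"
    and f :: "int \<Rightarrow> 'a \<Rightarrow> 'b"
  assumes X: "cochain_complex R X dX" and Y: "cochain_complex R Y dY"
    and f: "chain_map R X dX Y dY f"
begin

abbreviation "C \<equiv> cone_mod X Y"
abbreviation "D \<equiv> cone_d X dX Y dY f"

lemmas X_lmodule = cochain_complexD(1)[OF X] and dX_lhom = cochain_complexD(2)[OF X]
  and Y_lmodule = cochain_complexD(1)[OF Y] and dY_lhom = cochain_complexD(2)[OF Y]

lemma f_lhom: "lhom R (X i) (Y i) (f i)"
  using f unfolding chain_map_def by blast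

sublocale X: abelian_group "X i" for i by (rule lmoduleD(2)[OF X_lmodule])
sublocale Y: abelian_group "Y i" for i by (rule lmoduleD(2)[OF Y_lmodule])

text \<open>The following rules take the shifted index as a separate variable \<open>j = i + 1\<close>: a pattern
  \<open>i + 1\<close> would not match an index such as \<open>i + 2\<close>, the normal form kept by \<open>int_index_simps\<close>.\<close>

lemma f_commute [simp]: "x \<in> carrier (X i) \<Longrightarrow> j = i + 1 \<Longrightarrow> f j (dX i x) = dY i (f i x)"
  using f unfolding chain_map_def by blast

lemma maps_closed [simp]:
  "x \<in> carrier (X i) \<Longrightarrow> j = i + 1 \<Longrightarrow> dX i x \<in> carrier (X j)"
  "y \<in> carrier (Y i) \<Longrightarrow> j = i + 1 \<Longrightarrow> dY i y \<in> carrier (Y j)"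
  "x \<in> carrier (X i) \<Longrightarrow> f i x \<in> carrier (Y i)"
  using lhomD(1)[OF dX_lhom] lhomD(1)[OF dY_lhom] lhomD(1)[OF f_lhom] by auto

lemma map_zero [simp]:
  "dX i \<zero>\<^bsub>X i\<^esub> = \<zero>\<^bsub>X (i + 1)\<^esub>" "dY i \<zero>\<^bsub>Y i\<^esub> = \<zero>\<^bsub>Y (i + 1)\<^esub>" "f i \<zero>\<^bsub>X i\<^esub> = \<zero>\<^bsub>Y i\<^esub>"
  by (simp_all add: lhom_zero[OF dX_lhom] lhom_zero[OF dY_lhom] lhom_zero[OF f_lhom]
      X.abelian_group_axioms Y.abelian_group_axioms)

lemma uminus_zero [simp]: "\<ominus>\<^bsub>X i\<^esub> \<zero>\<^bsub>X i\<^esub> = \<zero>\<^bsub>X i\<^esub>"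
  by (rule X.minus_equality) simp_all

lemma map_add [simp]:
  "\<lbrakk>x \<in> carrier (X i); x' \<in> carrier (X i)\<rbrakk> \<Longrightarrow> dX i (x \<oplus>\<^bsub>X i\<^esub> x') = dX i x \<oplus>\<^bsub>X (i + 1)\<^esub> dX i x'"
  "\<lbrakk>y \<in> carrier (Y i); y' \<in> carrier (Y i)\<rbrakk> \<Longrightarrow> dY i (y \<oplus>\<^bsub>Y i\<^esub> y') = dY i y \<oplus>\<^bsub>Y (i + 1)\<^esub> dY i y'"
  using lhomD(2)[OF dX_lhom] lhomD(2)[OF dY_lhom] by auto

lemma map_uminus [simp]:
  "x \<in> carrier (X i) \<Longrightarrow> dX i (\<ominus>\<^bsub>X i\<^esub> x) = \<ominus>\<^bsub>X (i + 1)\<^esub> dX i x"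
  "y \<in> carrier (Y i) \<Longrightarrow> dY i (\<ominus>\<^bsub>Y i\<^esub> y) = \<ominus>\<^bsub>Y (i + 1)\<^esub> dY i y"
  "x \<in> carrier (X i) \<Longrightarrow> f i (\<ominus>\<^bsub>X i\<^esub> x) = \<ominus>\<^bsub>Y i\<^esub> f i x"
  by (simp_all add: lhom_neg[OF dX_lhom] lhom_neg[OF dY_lhom] lhom_neg[OF f_lhom]
      X.abelian_group_axioms Y.abelian_group_axioms)

lemma dd_zero [simp]:
  "x \<in> carrier (X i) \<Longrightarrow> j = i + 1 \<Longrightarrow> dX j (dX i x) = \<zero>\<^bsub>X (i + 2)\<^esub>"
  "y \<in> carrier (Y i) \<Longrightarrow> j = i + 1 \<Longrightarrow> dY j (dY i y) = \<zero>\<^bsub>Y (i + 2)\<^esub>"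
  using cochain_complexD(3)[OF X] cochain_complexD(3)[OF Y] by auto

lemma cone_d_eq:
  "D i = (\<lambda>z. (\<ominus>\<^bsub>X (i + 2)\<^esub> dX (i + 1) (fst z), f (i + 1) (fst z) \<oplus>\<^bsub>Y (i + 1)\<^esub> dY i (snd z)))"
  by (auto simp: cone_d_def)

lemma cone_cochain_complex: "cochain_complex R C D"
proof -
  have "lhom R (C i) (C (i + 1)) (D i)" for i
    unfolding cone_d_eq cone_mod_def
    using lhom_into_dsum[OF lhom_uminus[OF lhom_comp[OF lhom_dsum_fst dX_lhom] X_lmodule]
        lhom_add[OF lhom_comp[OF lhom_dsum_fst f_lhom] lhom_comp[OF lhom_dsum_snd dY_lhom] Y_lmodule]]
    by simp
  moreover have "D (i + 1) (D i z) = \<zero>\<^bsub>C (i + 2)\<^esub>" if "z \<in> carrier (C i)" for i z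
    using that by (auto simp: Y.l_neg Y.a_assoc[symmetric])
  ultimately show ?thesis
    unfolding cochain_complex_def cone_mod_def by (auto intro: dsum_lmodule X_lmodule Y_lmodule)
qed

end

locale cone_contraction = chain_map_cone R X dX Y dY f
  for R :: "'r ring"
    and X :: "int \<Rightarrow> ('r, 'a) module" and dX :: "int \<Rightarrow> 'a \<Rightarrow> 'a"
    and Y :: "int \<Rightarrow> ('r, 'b) module" and dY :: "int \<Rightarrow> 'b \<Rightarrow> 'b"
    and f :: "int \<Rightarrow> 'a \<Rightarrow> 'b" +
  fixes s :: "int \<Rightarrow> 'a \<times> 'b \<Rightarrow> 'a \<times> 'b"
  assumes s_lhom: "lhom R (cone_mod X Y i) (cone_mod X Y (i - 1)) (s i)"
    and s_contracts: "z \<in> carrier (cone_mod X Y i) \<Longrightarrow>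
      cone_d X dX Y dY f (i - 1) (s i z) \<oplus>\<^bsub>cone_mod X Y i\<^esub> s (i + 1) (cone_d X dX Y dY f i z) = z"
begin

text \<open>In matrix form, \<open>s i : X (i + 1) \<oplus> Y i \<rightarrow> X i \<oplus> Y (i - 1)\<close> is
  \<open>[homotopy_X (i + 1), homotopy_inverse i; _, \<ominus> homotopy_Y i]\<close>.\<close>

definition homotopy_inverse :: "int \<Rightarrow> 'b \<Rightarrow> 'a" where
  "homotopy_inverse i y = fst (s i (\<zero>\<^bsub>X (i + 1)\<^esub>, y))"

definition homotopy_X :: "int \<Rightarrow> 'a \<Rightarrow> 'a" where
  "homotopy_X i x = fst (s (i - 1) (x, \<zero>\<^bsub>Y (i - 1)\<^esub>))"

definition homotopy_Y :: "int \<Rightarrow> 'b \<Rightarrow> 'b" where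
  "homotopy_Y i y = \<ominus>\<^bsub>Y (i - 1)\<^esub> snd (s i (\<zero>\<^bsub>X (i + 1)\<^esub>, y))"

lemma s_lhom_dsum: "lhom R (dsum (X (i + 1)) (Y i)) (dsum (X i) (Y (i - 1))) (s i)"
  using s_lhom[of i] by (simp add: cone_mod_def)

lemma homotopy_inverse_lhom: "lhom R (Y i) (X i) (homotopy_inverse i)"
  using lhom_comp[OF lhom_comp[OF lhom_dsum_inr[OF X_lmodule] s_lhom_dsum] lhom_dsum_fst]
  unfolding homotopy_inverse_def .

lemma homotopy_X_lhom: "lhom R (X i) (X (i - 1)) (homotopy_X i)"
  using lhom_comp[OF lhom_comp[OF lhom_dsum_inl[OF Y_lmodule] s_lhom_dsum[of "i - 1"]] lhom_dsum_fst]
  unfolding homotopy_X_def by simp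

lemma homotopy_Y_lhom: "lhom R (Y i) (Y (i - 1)) (homotopy_Y i)"
  using lhom_uminus[OF lhom_comp[OF lhom_comp[OF lhom_dsum_inr[OF X_lmodule] s_lhom_dsum] lhom_dsum_snd]
      Y_lmodule]
  unfolding homotopy_Y_def .

lemma homotopy_closed [simp]:
  "y \<in> carrier (Y i) \<Longrightarrow> homotopy_inverse i y \<in> carrier (X i)"
  "x \<in> carrier (X i) \<Longrightarrow> j = i - 1 \<Longrightarrow> homotopy_X i x \<in> carrier (X j)"
  "y \<in> carrier (Y i) \<Longrightarrow> j = i - 1 \<Longrightarrow> homotopy_Y i y \<in> carrier (Y j)"
  using lhomD(1)[OF homotopy_inverse_lhom] lhomD(1)[OF homotopy_X_lhom] lhomD(1)[OF homotopy_Y_lhom]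
  by auto

lemma fst_s:
  assumes "x \<in> carrier (X (i + 1))" "y \<in> carrier (Y i)"
  shows "fst (s i (x, y)) = homotopy_X (i + 1) x \<oplus>\<^bsub>X i\<^esub> homotopy_inverse i y"
proof -
  have "s i (x, y) = s i (x, \<zero>\<^bsub>Y i\<^esub>) \<oplus>\<^bsub>dsum (X i) (Y (i - 1))\<^esub> s i (\<zero>\<^bsub>X (i + 1)\<^esub>, y)"
    using lhomD(2)[OF s_lhom_dsum[of i], of "(x, \<zero>\<^bsub>Y i\<^esub>)" "(\<zero>\<^bsub>X (i + 1)\<^esub>, y)"] assms by simp
  then show ?thesis
    unfolding homotopy_X_def homotopy_inverse_def by (simp add: split_beta dsum_def)
qed

lemma s_zero_Pair:
  assumes "y \<in> carrier (Y i)"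
  shows "s i (\<zero>\<^bsub>X (i + 1)\<^esub>, y) = (homotopy_inverse i y, \<ominus>\<^bsub>Y (i - 1)\<^esub> homotopy_Y i y)"
  using lhomD(1)[OF s_lhom_dsum[of i], of "(\<zero>\<^bsub>X (i + 1)\<^esub>, y)"] assms
  unfolding homotopy_inverse_def homotopy_Y_def by (auto simp: prod_eq_iff Y.minus_minus)

lemma s_contracts_inr:
  assumes y: "y \<in> carrier (Y i)"
  shows "\<ominus>\<^bsub>X (i + 1)\<^esub> dX i (homotopy_inverse i y) \<oplus>\<^bsub>X (i + 1)\<^esub> homotopy_inverse (i + 1) (dY i y)
      = \<zero>\<^bsub>X (i + 1)\<^esub>"
    and "f i (homotopy_inverse i y) \<oplus>\<^bsub>Y i\<^esub> dY (i - 1) (\<ominus>\<^bsub>Y (i - 1)\<^esub> homotopy_Y i y)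
      \<oplus>\<^bsub>Y i\<^esub> \<ominus>\<^bsub>Y i\<^esub> homotopy_Y (i + 1) (dY i y) = y"
  using s_contracts[of "(\<zero>\<^bsub>X (i + 1)\<^esub>, y)" i] y s_zero_Pair[OF y]
    s_zero_Pair[of "dY i y" "i + 1"]
  by simp_all

lemma s_contracts_inl:
  assumes x: "x \<in> carrier (X i)"
  shows "\<ominus>\<^bsub>X i\<^esub> dX (i - 1) (homotopy_X i x) \<oplus>\<^bsub>X i\<^esub>
      (\<ominus>\<^bsub>X i\<^esub> homotopy_X (i + 1) (dX i x) \<oplus>\<^bsub>X i\<^esub> homotopy_inverse i (f i x)) = x"
proof -
  have "D (i - 1) (x, \<zero>\<^bsub>Y (i - 1)\<^esub>) = (\<ominus>\<^bsub>X (i + 1)\<^esub> dX i x, f i x)" using x by simp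
  moreover have "fst (s i (\<ominus>\<^bsub>X (i + 1)\<^esub> dX i x, f i x))
      = \<ominus>\<^bsub>X i\<^esub> homotopy_X (i + 1) (dX i x) \<oplus>\<^bsub>X i\<^esub> homotopy_inverse i (f i x)"
    using x fst_s lhom_neg[OF homotopy_X_lhom X.abelian_group_axioms X.abelian_group_axioms] by simp
  ultimately show ?thesis
    using arg_cong[OF s_contracts[of "(x, \<zero>\<^bsub>Y (i - 1)\<^esub>)" "i - 1"], of fst] x
    by (simp add: cone_d_def cone_mod_def split_beta fst_dsum_add homotopy_X_def[symmetric])
qed

lemma homotopy_inverse_chain_map: "chain_map R Y dY X dX homotopy_inverse"
proof -
  have "homotopy_inverse (i + 1) (dY i y) = dX i (homotopy_inverse i y)" if y: "y \<in> carrier (Y i)" for i y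
  proof -
    let ?p = "dX i (homotopy_inverse i y)" and ?q = "homotopy_inverse (i + 1) (dY i y)"
    have "?q = ?p \<oplus>\<^bsub>X (i + 1)\<^esub> (\<ominus>\<^bsub>X (i + 1)\<^esub> ?p \<oplus>\<^bsub>X (i + 1)\<^esub> ?q)"
      using y by (simp add: X.r_neg2)
    also have "\<dots> = ?p" using y s_contracts_inr(1)[OF y] by simp
    finally show ?thesis .
  qed
  then show ?thesis unfolding chain_map_def using homotopy_inverse_lhom by blast
qed

lemma f_homotopy_inverse_homotopic: "homotopic R Y dY Y dY (\<lambda>i. f i \<circ> homotopy_inverse i) (\<lambda>i. id)"
proof -
  have "f i (homotopy_inverse i y) = y \<oplus>\<^bsub>Y i\<^esub> dY (i - 1) (homotopy_Y i y) \<oplus>\<^bsub>Y i\<^esub> homotopy_Y (i + 1) (dY i y)"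
    if y: "y \<in> carrier (Y i)" for i y
  proof (rule Y.add_neg_add_neg_eqD)
    show "f i (homotopy_inverse i y) \<oplus>\<^bsub>Y i\<^esub> \<ominus>\<^bsub>Y i\<^esub> dY (i - 1) (homotopy_Y i y)
        \<oplus>\<^bsub>Y i\<^esub> \<ominus>\<^bsub>Y i\<^esub> homotopy_Y (i + 1) (dY i y) = y"
      using s_contracts_inr(2)[OF y] y by simp
  qed (use y in simp_all)
  then show ?thesis unfolding homotopic_def using homotopy_Y_lhom by auto
qed

lemma homotopy_inverse_f_homotopic: "homotopic R X dX X dX (\<lambda>i. homotopy_inverse i \<circ> f i) (\<lambda>i. id)"
proof -
  have "homotopy_inverse i (f i x) = x \<oplus>\<^bsub>X i\<^esub> dX (i - 1) (homotopy_X i x) \<oplus>\<^bsub>X i\<^esub> homotopy_X (i + 1) (dX i x)"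
    if x: "x \<in> carrier (X i)" for i x
  proof (rule X.add_neg_add_neg_eqD)
    show "homotopy_inverse i (f i x) \<oplus>\<^bsub>X i\<^esub> \<ominus>\<^bsub>X i\<^esub> dX (i - 1) (homotopy_X i x)
        \<oplus>\<^bsub>X i\<^esub> \<ominus>\<^bsub>X i\<^esub> homotopy_X (i + 1) (dX i x) = x"
      using s_contracts_inl[OF x] x by (simp add: X.a_ac)
  qed (use x in simp_all)
  then show ?thesis unfolding homotopic_def using homotopy_X_lhom by auto
qed

end

context chain_map_cone
begin

lemma homotopy_equivalence_if_contractible_cone:
  assumes "contractible R C D"
  shows "homotopy_equivalence R X dX Y dY f"
proof -
  obtain s where "cone_contraction R X dX Y dY f s"
    using assms chain_map_cone_axioms
    unfolding contractible_def cone_contraction_def cone_contraction_axioms_def by blast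
  then interpret cone_contraction R X dX Y dY f s .
  show ?thesis unfolding homotopy_equivalence_def
    using f homotopy_inverse_chain_map homotopy_inverse_f_homotopic f_homotopy_inverse_homotopic
    by blast
qed

end

theorem proposition4p9:
  fixes R :: "'r ring" and n :: enat
    and X :: "int \<Rightarrow> ('r, 'a) module" and dX :: "int \<Rightarrow> 'a \<Rightarrow> 'a"
    and Y :: "int \<Rightarrow> ('r, 'b) module" and dY :: "int \<Rightarrow> 'b \<Rightarrow> 'b"
    and f :: "int \<Rightarrow> 'a \<Rightarrow> 'b"
  assumes "ring R"
    and "cochain_complex R X dX" and "cochain_complex R Y dY"
    and "bounded_above X" and "bounded_above Y"
    and "\<forall>i. n_projective R n TYPE('a \<times> 'b) (X i)"
    and "\<forall>i. n_projective R n TYPE('a \<times> 'b) (Y i)"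
    and "n_quasi_iso R n X dX Y dY f"
  shows "homotopy_equivalence R X dX Y dY f"
proof -
  interpret chain_map_cone R X dX Y dY f
    using assms(2,3,8) unfolding chain_map_cone_def n_quasi_iso_def by blast
  have "contractible R (cone_mod X Y) (cone_d X dX Y dY f)"
  proof (rule n_exact_contractible)
    show "cochain_complex R (cone_mod X Y) (cone_d X dX Y dY f)"
      by (rule cone_cochain_complex)
    show "bounded_above (cone_mod X Y)"
      using assms(4,5) by (rule bounded_above_cone)
    show "n_exact_complex R n (cone_mod X Y) (cone_d X dX Y dY f)"
      using assms(8) unfolding n_quasi_iso_def by blast
    show "\<forall>i. lifts_n_exact R n TYPE('a \<times> 'b) (cone_mod X Y i)"
      using assms(6,7) X_lmodule Y_lmodule
      by (simp add: cone_mod_def lifts_n_exact_dsum n_projective_lifts_n_exact)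
  qed
  then show ?thesis by (rule homotopy_equivalence_if_contractible_cone)
qed

end
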